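(* Let $b>\pi$ and let $V$ be real-valued and absolutely continuous on $[0,b]$. Then for each $z\in\mathbb C$ the series $$\sum_{t\in\operatorname{spec}(H_\pi(\pi/2))}\frac{k_\pi(t,\overline z)}{k_\pi(t,t)}\,\xi(x,t)$$ converges absolutely and uniformly with respect to $x\in[0,b]$.
   Context: $\xi(x,z)$ is the solution on $[0,b]$ of $-\xi''+V\xi=z\xi$, $\xi(0,z)=1$, $\xi'(0,z)=0$. $H_\pi(\pi/2)$ is the selfadjoint operator $-\frac{d^2}{dx^2}+V$ in $L_2(0,\pi)$ with $\varphi'(0)=0=\varphi'(\pi)$ (its spectrum is the set of $\lambda$ with $\xi'(\pi,\lambda)=0$). For real $t$, $k_\pi(t,\overline z)=\int_0^\pi\xi(x,t)\xi(x,z)\,dx$ and $k_\pi(t,t)=\int_0^\pi\xi(x,t)^2dx$. *)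

theory Defs
  imports "HOL-Analysis.Analysis"
begin

definition abs_continuous_on :: "real \<Rightarrow> real \<Rightarrow> (real \<Rightarrow> real) \<Rightarrow> bool" where
  "abs_continuous_on a b f \<longleftrightarrow>
     (\<forall>\<epsilon>>0. \<exists>\<delta>>0. \<forall>(n::nat) (l::nat \<Rightarrow> real) (r::nat \<Rightarrow> real).
        (\<forall>i<n. a \<le> l i \<and> l i \<le> r i \<and> r i \<le> b) \<and>
        (\<forall>i<n. \<forall>j<n. i \<noteq> j \<longrightarrow> r i \<le> l j \<or> r j \<le> l i) \<and>
        (\<Sum>i<n. r i - l i) < \<delta>
        \<longrightarrow> (\<Sum>i<n. \<bar>f (r i) - f (l i)\<bar>) < \<epsilon>)"

text \<open>k_pi(t, conj z) = integral over [0,pi] of xi(x,t) xi(x,z).\<close>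
definition k_pi :: "(real \<Rightarrow> complex \<Rightarrow> complex) \<Rightarrow> real \<Rightarrow> complex \<Rightarrow> complex" where
  "k_pi xi t z = integral {0..pi} (\<lambda>x. xi x (complex_of_real t) * xi x z)"

end

theory Submission
  imports Defs
begin

text \<open>
  For real \<open>t\<close> the solution \<open>\<xi>(\<cdot>, t)\<close> is real, and a Gronwall estimate for the energy
  \<open>\<xi>'\<^sup>2 + max 1 t \<cdot> \<xi>\<^sup>2\<close> bounds \<open>\<xi>(x, t)\<close> uniformly in \<open>x \<in> [0, b]\<close> and in all
  \<open>t > - max \<bar>V\<bar> - 1\<close>, a range containing the whole Neumann spectrum; integrating the energy
  identity over \<open>[0, \<pi>]\<close> also bounds \<open>k\<^sub>\<pi>(t, t)\<close> away from zero. For an eigenvalue \<open>t\<close>,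
  Lagrange's identity gives \<open>k\<^sub>\<pi>(t, z\<^sup>*) = \<xi>(\<pi>, t) \<xi>'(\<pi>, z) / (t - z)\<close>, so the coefficients
  are \<open>O(1/t)\<close>. The eigenfunctions are orthogonal, and Bessel's inequality for a tent function
  of width of order \<open>1/\<surd>T\<close>, on which every eigenfunction with eigenvalue at most \<open>T\<close> is at
  least \<open>1/2\<close>, shows that there are \<open>O(\<surd>T)\<close> eigenvalues below \<open>T\<close>. Dyadic summation then
  makes \<open>\<Sum> 1/t\<close> converge over the spectrum, and the Weierstrass M-test concludes.
\<close>

lemma abs_continuous_on_imp_continuous_on:
  assumes "abs_continuous_on a c f"
  shows "continuous_on {a..c} f"
  unfolding continuous_on_iff
proof (intro ballI allI impI)
  fix x e :: real assume x: "x \<in> {a..c}" and e: "0 < e"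
  from assms[unfolded abs_continuous_on_def, rule_format, OF e]
  obtain d where d: "d > 0" and ac: "\<forall>(n::nat) l r.
        (\<forall>i<n. a \<le> l i \<and> l i \<le> r i \<and> r i \<le> c) \<and>
        (\<forall>i<n. \<forall>j<n. i \<noteq> j \<longrightarrow> r i \<le> l j \<or> r j \<le> l i) \<and>
        (\<Sum>i<n. r i - l i) < d
        \<longrightarrow> (\<Sum>i<n. \<bar>f (r i) - f (l i)\<bar>) < e"
    by (elim exE conjE)
  show "\<exists>d>0. \<forall>y\<in>{a..c}. dist y x < d \<longrightarrow> dist (f y) (f x) < e"
  proof (intro exI[of _ d] conjI ballI impI d)
    fix y assume y: "y \<in> {a..c}" and "dist y x < d"
    then have "(\<Sum>i<Suc 0. \<bar>f (max x y) - f (min x y)\<bar>) < e"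
      using x by (intro ac[rule_format, of "Suc 0" "\<lambda>_. min x y" "\<lambda>_. max x y"])
        (auto simp: dist_real_def)
    then show "dist (f y) (f x) < e"
      by (cases "x \<le> y") (auto simp: dist_real_def max_def min_def abs_minus_commute)
  qed
qed

lemma DERIV_within_nonpos_imp_antimono:
  fixes g g' :: "real \<Rightarrow> real"
  assumes deriv: "\<And>x. x \<in> {a..c} \<Longrightarrow> (g has_real_derivative g' x) (at x within {a..c})"
    and nonpos: "\<And>x. x \<in> {a..c} \<Longrightarrow> g' x \<le> 0"
    and xy: "a \<le> x" "x \<le> y" "y \<le> c"
  shows "g y \<le> g x"
proof -
  have "\<exists>z\<in>{x..y}. g y - g x = (\<lambda>h. g' z * h) (y - x)"
  proof (rule mvt_very_simple)
    fix z assume z: "x \<le> z" "z \<le> y"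
    have "(g has_real_derivative g' z) (at z within {x..y})"
      by (rule DERIV_subset[OF deriv]) (use z xy in auto)
    then show "(g has_derivative (\<lambda>h. g' z * h)) (at z within {x..y})"
      by (simp add: has_field_derivative_def)
  qed (use xy in auto)
  then obtain z where z: "z \<in> {x..y}" "g y - g x = g' z * (y - x)" by auto
  have "g' z * (y - x) \<le> 0"
    using nonpos[of z] z xy by (intro mult_nonpos_nonneg) auto
  then show ?thesis using z by simp
qed

text \<open>Two-sided Gronwall estimate: the factors \<open>exp (\<mp>\<alpha> x)\<close> make \<open>e\<close> monotone.\<close>

lemma exp_bounds_if_abs_deriv_le:
  fixes e e' :: "real \<Rightarrow> real"
  assumes deriv: "\<And>x. x \<in> {0..c} \<Longrightarrow> (e has_real_derivative e' x) (at x within {0..c})"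
    and bound: "\<And>x. x \<in> {0..c} \<Longrightarrow> \<bar>e' x\<bar> \<le> \<alpha> * e x" and x: "x \<in> {0..c}"
  shows "e x \<le> e 0 * exp (\<alpha> * x)" "e 0 * exp (- \<alpha> * x) \<le> e x"
proof -
  have "e x * exp (- \<alpha> * x) \<le> e 0 * exp (- \<alpha> * 0)"
  proof (rule DERIV_within_nonpos_imp_antimono[where g = "\<lambda>y. e y * exp (- \<alpha> * y)"
        and g' = "\<lambda>y. (e' y - \<alpha> * e y) * exp (- \<alpha> * y)"])
    fix y assume y: "y \<in> {0..c}"
    show "((\<lambda>y. e y * exp (- \<alpha> * y)) has_real_derivative (e' y - \<alpha> * e y) * exp (- \<alpha> * y))
        (at y within {0..c})"
      using deriv[OF y] by (auto intro!: derivative_eq_intros simp: algebra_simps)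
    show "(e' y - \<alpha> * e y) * exp (- \<alpha> * y) \<le> 0"
      using bound[OF y] by (intro mult_nonpos_nonneg) auto
  qed (use x in auto)
  then have "e x * exp (- \<alpha> * x) * exp (\<alpha> * x) \<le> e 0 * exp (\<alpha> * x)"
    by simp
  then show "e x \<le> e 0 * exp (\<alpha> * x)"
    by (simp add: mult.assoc exp_add[symmetric])
  have "- e x * exp (\<alpha> * x) \<le> - e 0 * exp (\<alpha> * 0)"
  proof (rule DERIV_within_nonpos_imp_antimono[where g = "\<lambda>y. - e y * exp (\<alpha> * y)"
        and g' = "\<lambda>y. - (e' y + \<alpha> * e y) * exp (\<alpha> * y)"])
    fix y assume y: "y \<in> {0..c}"
    show "((\<lambda>y. - e y * exp (\<alpha> * y)) has_real_derivative - (e' y + \<alpha> * e y) * exp (\<alpha> * y))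
        (at y within {0..c})"
      using deriv[OF y] by (auto intro!: derivative_eq_intros simp: algebra_simps)
    show "- (e' y + \<alpha> * e y) * exp (\<alpha> * y) \<le> 0"
      using bound[OF y] by (intro mult_nonpos_nonneg) auto
  qed (use x in auto)
  then have "e 0 * exp (- \<alpha> * x) \<le> e x * exp (\<alpha> * x) * exp (- \<alpha> * x)"
    by (intro mult_right_mono) auto
  then show "e 0 * exp (- \<alpha> * x) \<le> e x"
    by (simp add: mult.assoc exp_add[symmetric])
qed

text \<open>Energy estimate for \<open>p' = q\<close>, \<open>q' = W p\<close>: with \<open>E = q\<^sup>2 + \<mu> p\<^sup>2\<close> one has
  \<open>E' = 2 p q (W + \<mu>)\<close>, and \<open>2 \<bar>p q\<bar> \<le> E\<close> as soon as \<open>\<mu> \<ge> 1\<close>.\<close>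

lemma energy_exp_bounds:
  fixes p q W :: "real \<Rightarrow> real"
  assumes dp: "\<And>x. x \<in> {0..c} \<Longrightarrow> (p has_real_derivative q x) (at x within {0..c})"
    and dq: "\<And>x. x \<in> {0..c} \<Longrightarrow> (q has_real_derivative W x * p x) (at x within {0..c})"
    and \<mu>: "\<mu> \<ge> 1" and \<alpha>: "\<And>x. x \<in> {0..c} \<Longrightarrow> \<bar>W x + \<mu>\<bar> \<le> \<alpha>" and x: "x \<in> {0..c}"
  shows "q x ^ 2 + \<mu> * p x ^ 2 \<le> (q 0 ^ 2 + \<mu> * p 0 ^ 2) * exp (\<alpha> * x)"
    and "(q 0 ^ 2 + \<mu> * p 0 ^ 2) * exp (- \<alpha> * x) \<le> q x ^ 2 + \<mu> * p x ^ 2"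
proof -
  define E where "E x = q x ^ 2 + \<mu> * p x ^ 2" for x
  define E' where "E' x = 2 * (p x * q x) * (W x + \<mu>)" for x
  have dE: "(E has_real_derivative E' x) (at x within {0..c})" if "x \<in> {0..c}" for x
    unfolding E_def E'_def using dp[OF that] dq[OF that]
    by (auto intro!: derivative_eq_intros simp: algebra_simps)
  have bE: "\<bar>E' x\<bar> \<le> \<alpha> * E x" if x: "x \<in> {0..c}" for x
  proof -
    have "2 * \<bar>p x * q x\<bar> \<le> E x"
      using \<mu> sum_squares_bound[of "\<bar>p x\<bar>" "\<bar>q x\<bar>"] mult_right_mono[OF \<mu>, of "p x ^ 2"]
      by (simp add: E_def abs_mult power2_eq_square)
    then have "2 * \<bar>p x * q x\<bar> * \<bar>W x + \<mu>\<bar> \<le> E x * \<alpha>"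
      using \<alpha>[OF x] by (intro mult_mono) auto
    then show ?thesis by (simp add: E'_def abs_mult mult.commute)
  qed
  show "q x ^ 2 + \<mu> * p x ^ 2 \<le> (q 0 ^ 2 + \<mu> * p 0 ^ 2) * exp (\<alpha> * x)"
    using exp_bounds_if_abs_deriv_le(1)[OF dE bE x] by (simp add: E_def)
  show "(q 0 ^ 2 + \<mu> * p 0 ^ 2) * exp (- \<alpha> * x) \<le> q x ^ 2 + \<mu> * p x ^ 2"
    using exp_bounds_if_abs_deriv_le(2)[OF dE bE x] by (simp add: E_def)
qed

lemma integral_tent:
  fixes h c :: real
  assumes "0 \<le> h" "h \<le> c"
  shows "integral {0..c} (\<lambda>x. max 0 (h - x)) = h\<^sup>2 / 2"
proof -
  have "integral {0..c} (\<lambda>x. max 0 (h - x)) =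
      integral {0..h} (\<lambda>x. max 0 (h - x)) + integral {h..c} (\<lambda>x. max 0 (h - x))"
    by (rule Henstock_Kurzweil_Integration.integral_combine[OF assms, symmetric])
      (intro integrable_continuous_interval continuous_intros)
  also have "integral {h..c} (\<lambda>x. max 0 (h - x)) = 0"
    by (subst integral_cong[of _ _ "\<lambda>_. 0"]) auto
  also have "integral {0..h} (\<lambda>x. max 0 (h - x)) = integral {0..h} (\<lambda>x. h - x)"
    by (rule integral_cong) auto
  also have "\<dots> = h\<^sup>2 / 2"
  proof (rule integral_unique)
    have "((\<lambda>x. h - x) has_integral (h * h - h\<^sup>2 / 2) - (h * 0 - 0\<^sup>2 / 2)) {0..h}"
    proof (rule fundamental_theorem_of_calculus)
      show "((\<lambda>x. h * x - x\<^sup>2 / 2) has_vector_derivative h - x) (at x within {0..h})" for x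
        by (auto intro!: derivative_eq_intros simp flip: has_real_derivative_iff_has_vector_derivative)
    qed (use assms in auto)
    then show "((\<lambda>x. h - x) has_integral h\<^sup>2 / 2) {0..h}"
      by (simp add: power2_eq_square)
  qed
  finally show ?thesis by simp
qed

lemma integral_mult_sum:
  fixes g :: "real \<Rightarrow> real" and e :: "'i \<Rightarrow> real \<Rightarrow> real"
  assumes F: "finite F" and cont: "continuous_on {a..c} g" "\<And>i. i \<in> F \<Longrightarrow> continuous_on {a..c} (e i)"
  shows "integral {a..c} (\<lambda>x. g x * (\<Sum>i\<in>F. \<alpha> i * e i x)) =
    (\<Sum>i\<in>F. \<alpha> i * integral {a..c} (\<lambda>x. g x * e i x))"
proof -
  have "integral {a..c} (\<lambda>x. g x * (\<Sum>i\<in>F. \<alpha> i * e i x)) =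
      integral {a..c} (\<lambda>x. \<Sum>i\<in>F. \<alpha> i * (g x * e i x))"
    by (simp add: sum_distrib_left algebra_simps)
  also have "\<dots> = (\<Sum>i\<in>F. integral {a..c} (\<lambda>x. \<alpha> i * (g x * e i x)))"
    by (rule integral_sum[OF F]) (intro integrable_continuous_interval continuous_intros cont)
  finally show ?thesis by simp
qed

lemma bessel_inequality_integral:
  fixes f :: "real \<Rightarrow> real" and e :: "'i \<Rightarrow> real \<Rightarrow> real"
  assumes F: "finite F"
    and cont: "continuous_on {a..c} f" "\<And>i. i \<in> F \<Longrightarrow> continuous_on {a..c} (e i)"
    and orth: "\<And>i j. i \<in> F \<Longrightarrow> j \<in> F \<Longrightarrow> i \<noteq> j \<Longrightarrow> integral {a..c} (\<lambda>x. e i x * e j x) = 0"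
    and pos: "\<And>i. i \<in> F \<Longrightarrow> integral {a..c} (\<lambda>x. e i x * e i x) > 0"
  shows "(\<Sum>i\<in>F. (integral {a..c} (\<lambda>x. f x * e i x))\<^sup>2 / integral {a..c} (\<lambda>x. e i x * e i x))
           \<le> integral {a..c} (\<lambda>x. f x * f x)"
proof -
  define ip where "ip g h = integral {a..c} (\<lambda>x. g x * h x)" for g h :: "real \<Rightarrow> real"
  define \<alpha> where "\<alpha> i = ip f (e i) / ip (e i) (e i)" for i
  define P where "P x = (\<Sum>i\<in>F. \<alpha> i * e i x)" for x
  have P: "continuous_on {a..c} P"
    unfolding P_def by (intro continuous_intros cont)
  have ip_P: "ip g P = (\<Sum>i\<in>F. \<alpha> i * ip g (e i))" if "continuous_on {a..c} g" for g
    unfolding ip_def P_def by (rule integral_mult_sum[OF F that cont(2)])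
  have ip_commute: "ip g h = ip h g" for g h
    by (simp add: ip_def mult.commute)
  have "ip P P = (\<Sum>j\<in>F. \<alpha> j * ip (e j) P)"
    using ip_P[OF P] by (simp add: ip_commute)
  also have "\<dots> = (\<Sum>j\<in>F. \<alpha> j * \<alpha> j * ip (e j) (e j))"
  proof (intro sum.cong refl)
    fix j assume j: "j \<in> F"
    have "ip (e j) P = (\<Sum>i\<in>F. \<alpha> i * ip (e j) (e i))" by (rule ip_P[OF cont(2)[OF j]])
    also have "\<dots> = \<alpha> j * ip (e j) (e j)"
      using F j orth[of j] by (subst sum.remove) (auto intro!: sum.neutral simp: ip_def, metis)
    finally show "\<alpha> j * ip (e j) P = \<alpha> j * \<alpha> j * ip (e j) (e j)" by simp
  qed
  finally have PP: "ip P P = (\<Sum>j\<in>F. \<alpha> j * \<alpha> j * ip (e j) (e j))" .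
  have "0 \<le> ip (\<lambda>x. f x - P x) (\<lambda>x. f x - P x)"
    unfolding ip_def by (intro integral_nonneg integrable_continuous_interval continuous_intros cont P) auto
  also have "\<dots> = ip f f - 2 * ip f P + ip P P"
  proof -
    have "((\<lambda>x. f x * f x - 2 * (f x * P x) + P x * P x) has_integral ip f f - 2 * ip f P + ip P P)
        {a..c}"
      unfolding ip_def
      by (intro has_integral_add has_integral_diff has_integral_mult_right integrable_integral
          integrable_continuous_interval continuous_intros cont P)
    moreover have "(\<lambda>x. (f x - P x) * (f x - P x)) = (\<lambda>x. f x * f x - 2 * (f x * P x) + P x * P x)"
      by (simp add: fun_eq_iff algebra_simps)
    ultimately show ?thesis
      unfolding ip_def by (simp add: integral_unique)
  qed
  also have "\<dots> = ip f f - (\<Sum>i\<in>F. (ip f (e i))\<^sup>2 / ip (e i) (e i))"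
  proof -
    have "\<alpha> i * ip f (e i) = (ip f (e i))\<^sup>2 / ip (e i) (e i)" for i
      by (simp add: \<alpha>_def power2_eq_square)
    moreover have "\<alpha> i * \<alpha> i * ip (e i) (e i) = (ip f (e i))\<^sup>2 / ip (e i) (e i)" if "i \<in> F" for i
      using pos[OF that] by (simp add: \<alpha>_def ip_def power2_eq_square)
    ultimately show ?thesis
      unfolding ip_P[OF cont(1)] PP by simp
  qed
  finally show ?thesis by (simp add: ip_def)
qed

lemma sum_inverse_le_dyadic:
  fixes S F :: "real set"
  assumes S: "S \<subseteq> {1<..}"
    and count: "\<And>T G. T \<ge> 1 \<Longrightarrow> finite G \<Longrightarrow> G \<subseteq> S \<Longrightarrow> \<forall>t\<in>G. t \<le> T \<Longrightarrow>
                  real (card G) \<le> C * sqrt T"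
    and F: "finite F" "F \<subseteq> S"
  shows "(\<Sum>t\<in>{t\<in>F. t \<le> 2 ^ N}. 1 / t) \<le> C * sqrt 2 * (\<Sum>j<N. (1 / sqrt 2) ^ j)"
proof (induction N)
  case 0
  have "{t\<in>F. t \<le> 1} = {}" using F S by force
  then show ?case unfolding power_0 by (simp only: sum.empty) simp
next
  case (Suc N)
  define A where "A = {t\<in>F. t \<le> 2 ^ N}"
  define B where "B = {t\<in>F. 2 ^ N < t \<and> t \<le> 2 ^ Suc N}"
  have N: "(2::real) ^ N \<le> 2 ^ Suc N" by simp
  have "{t\<in>F. t \<le> 2 ^ Suc N} = A \<union> B"
    unfolding A_def B_def using order_trans[OF _ N] by (auto simp del: power_Suc)
  then have "(\<Sum>t\<in>{t\<in>F. t \<le> 2 ^ Suc N}. 1 / t) = (\<Sum>t\<in>A. 1 / t) + (\<Sum>t\<in>B. 1 / t)"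
    using F by (simp add: sum.union_disjoint A_def B_def disjoint_iff del: power_Suc)
  moreover have "(\<Sum>t\<in>B. 1 / t) \<le> C * sqrt 2 * (1 / sqrt 2) ^ N"
  proof -
    have "(\<Sum>t\<in>B. 1 / t) \<le> (\<Sum>t\<in>B. 1 / 2 ^ N)"
      by (rule sum_mono) (auto simp: B_def intro!: divide_left_mono)
    also have "\<dots> = real (card B) / 2 ^ N" by simp
    also have "\<dots> \<le> C * sqrt (2 ^ Suc N) / 2 ^ N"
      using F by (intro divide_right_mono count) (auto simp: B_def simp del: power_Suc)
    also have "C * sqrt (2 ^ Suc N) / 2 ^ N = C * sqrt 2 * (1 / sqrt 2) ^ N"
    proof -
      have "sqrt (2 ^ Suc N) = sqrt 2 * sqrt 2 ^ N" "(2::real) ^ N = sqrt 2 ^ N * sqrt 2 ^ N"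
        by (simp_all add: real_sqrt_power real_sqrt_mult flip: power_mult_distrib)
      then show ?thesis by (simp add: power_one_over)
    qed
    finally show ?thesis .
  qed
  ultimately show ?case
    using Suc.IH unfolding A_def by (simp add: algebra_simps)
qed

lemma summable_on_inverse_if_card_le_sqrt:
  fixes S :: "real set"
  assumes S: "S \<subseteq> {1<..}"
    and count: "\<And>T G. T \<ge> 1 \<Longrightarrow> finite G \<Longrightarrow> G \<subseteq> S \<Longrightarrow> \<forall>t\<in>G. t \<le> T \<Longrightarrow>
                  real (card G) \<le> C * sqrt T"
  shows "(\<lambda>t. 1 / t) summable_on S"
proof (rule nonneg_bdd_above_summable_on)
  define q :: real where "q = 1 / sqrt 2"
  have q: "0 \<le> q" "q < 1" by (auto simp: q_def)
  have C: "C \<ge> 0"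
    using count[of 1 "{}"] by simp
  show "bdd_above (sum (\<lambda>t. 1 / t) ` {F. F \<subseteq> S \<and> finite F})"
  proof (rule bdd_aboveI2)
    fix F assume "F \<in> {F. F \<subseteq> S \<and> finite F}"
    then have F: "finite F" "F \<subseteq> S" by auto
    obtain N where "Max (insert 0 F) < (2::real) ^ N"
      using real_arch_pow[of 2] by auto
    then have "{t\<in>F. t \<le> 2 ^ N} = F"
      using F by (auto intro: less_imp_le order_trans[OF Max_ge])
    then have "(\<Sum>t\<in>F. 1 / t) \<le> C * sqrt 2 * (\<Sum>j<N. q ^ j)"
      using sum_inverse_le_dyadic[OF S count F, of N] unfolding q_def by (simp only:)
    also have "\<dots> = C * sqrt 2 * ((1 - q ^ N) / (1 - q))"
      using q by (simp add: sum_gp_strict)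
    also have "\<dots> \<le> C * sqrt 2 * (1 / (1 - q))"
      using C q by (intro mult_left_mono divide_right_mono) auto
    finally show "(\<Sum>t\<in>F. 1 / t) \<le> C * sqrt 2 * (1 / (1 - q))" .
  qed
qed (use S in auto)

locale neumann_solution =
  fixes b :: real and V :: "real \<Rightarrow> real" and xi xi' :: "real \<Rightarrow> complex \<Rightarrow> complex"
  assumes b_gt_pi: "b > pi"
    and V_cont: "continuous_on {0..b} V"
    and xi_0: "\<And>w. xi 0 w = 1" and xi'_0: "\<And>w. xi' 0 w = 0"
    and xi_deriv: "\<And>w x. x \<in> {0..b} \<Longrightarrow>
          ((\<lambda>y. xi y w) has_vector_derivative xi' x w) (at x within {0..b})"
    and xi'_deriv: "\<And>w x. x \<in> {0..b} \<Longrightarrow>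
          ((\<lambda>y. xi' y w) has_vector_derivative (complex_of_real (V x) - w) * xi x w)
             (at x within {0..b})"
begin

definition Vmax :: real where
  "Vmax = (SUP x\<in>{0..b}. \<bar>V x\<bar>)"

lemma abs_V_le_Vmax:
  assumes "x \<in> {0..b}"
  shows "\<bar>V x\<bar> \<le> Vmax"
proof -
  have "compact ((\<lambda>x. \<bar>V x\<bar>) ` {0..b})"
    by (intro compact_continuous_image continuous_intros V_cont) simp
  then have "bdd_above ((\<lambda>x. \<bar>V x\<bar>) ` {0..b})"
    by (simp add: bounded_imp_bdd_above compact_imp_bounded)
  then show ?thesis
    unfolding Vmax_def using assms by (rule cSUP_upper[rotated])
qed

lemma Vmax_nonneg: "Vmax \<ge> 0"
proof -
  have "0 \<in> {0..b}" using less_trans[OF pi_gt_zero b_gt_pi] by simp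
  then show ?thesis using abs_V_le_Vmax[of 0] by linarith
qed

lemma interval_pi_subset: "{0..pi} \<subseteq> {0..b}"
  using b_gt_pi by auto

lemma lagrange_identity:
  assumes "w1 \<noteq> w2"
  shows "((\<lambda>x. xi x w1 * xi x w2) has_integral
           (xi pi w1 * xi' pi w2 - xi' pi w1 * xi pi w2) / (w1 - w2)) {0..pi}"
proof -
  define W where "W x = xi x w1 * xi' x w2 - xi' x w1 * xi x w2" for x
  have "((\<lambda>x. (w1 - w2) * (xi x w1 * xi x w2)) has_integral W pi - W 0) {0..pi}"
  proof (rule fundamental_theorem_of_calculus)
    fix x assume "x \<in> {0..pi}"
    then have "\<And>w. ((\<lambda>y. xi y w) has_vector_derivative xi' x w) (at x within {0..pi})"
        "\<And>w. ((\<lambda>y. xi' y w) has_vector_derivative (complex_of_real (V x) - w) * xi x w)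
          (at x within {0..pi})"
      using xi_deriv xi'_deriv interval_pi_subset
      by (blast intro: has_vector_derivative_within_subset)+
    then show "(W has_vector_derivative (w1 - w2) * (xi x w1 * xi x w2)) (at x within {0..pi})"
      unfolding W_def
      by (auto intro!: derivative_eq_intros simp: algebra_simps)
  qed simp
  then have "((\<lambda>x. (w1 - w2) * (xi x w1 * xi x w2) / (w1 - w2)) has_integral (W pi - W 0) / (w1 - w2))
      {0..pi}"
    by (rule has_integral_divide)
  then show ?thesis
    using assms by (simp add: W_def xi_0 xi'_0)
qed

text \<open>For real \<open>r\<close> the imaginary parts solve the same real equation with zero initial data,
  so the energy estimate forces them to vanish.\<close>

lemma Im_xi_of_real:
  assumes x: "x \<in> {0..b}"
  shows "Im (xi x (of_real r)) = 0" "Im (xi' x (of_real r)) = 0"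
proof -
  define p where "p y = Im (xi y (of_real r))" for y
  define q where "q y = Im (xi' y (of_real r))" for y
  have "q x ^ 2 + 1 * p x ^ 2 \<le> (q 0 ^ 2 + 1 * p 0 ^ 2) * exp ((Vmax + \<bar>r\<bar> + 1) * x)"
  proof (rule energy_exp_bounds(1)[where W = "\<lambda>y. V y - r"])
    fix y assume y: "y \<in> {0..b}"
    show "(p has_real_derivative q y) (at y within {0..b})"
      unfolding p_def q_def by (rule has_field_derivative_Im[OF xi_deriv[OF y]])
    show "(q has_real_derivative (V y - r) * p y) (at y within {0..b})"
      unfolding p_def q_def using has_field_derivative_Im[OF xi'_deriv[OF y, of "of_real r"]] by simp
    show "\<bar>V y - r + 1\<bar> \<le> Vmax + \<bar>r\<bar> + 1"
      using abs_V_le_Vmax[OF y] by linarith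
  qed (use x in auto)
  then have "q x ^ 2 + p x ^ 2 \<le> 0"
    by (simp add: p_def q_def xi_0 xi'_0)
  then show "Im (xi x (of_real r)) = 0" "Im (xi' x (of_real r)) = 0"
    unfolding p_def q_def by (smt (verit) zero_le_power2 power_eq_0_iff)+
qed

definition u :: "real \<Rightarrow> real \<Rightarrow> real" where
  "u r x = Re (xi x (of_real r))"

definition u' :: "real \<Rightarrow> real \<Rightarrow> real" where
  "u' r x = Re (xi' x (of_real r))"

lemma xi_of_real: "x \<in> {0..b} \<Longrightarrow> xi x (of_real r) = of_real (u r x)"
  using Im_xi_of_real(1)[of x r] by (simp add: u_def complex_eq_iff)

lemma xi'_of_real: "x \<in> {0..b} \<Longrightarrow> xi' x (of_real r) = of_real (u' r x)"
  using Im_xi_of_real(2)[of x r] by (simp add: u'_def complex_eq_iff)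

lemma u_0: "u r 0 = 1" and u'_0: "u' r 0 = 0"
  by (simp_all add: u_def u'_def xi_0 xi'_0)

lemma u_deriv: "x \<in> {0..b} \<Longrightarrow> (u r has_real_derivative u' r x) (at x within {0..b})"
  unfolding u_def u'_def by (rule has_field_derivative_Re[OF xi_deriv])

lemma u'_deriv: "x \<in> {0..b} \<Longrightarrow> (u' r has_real_derivative (V x - r) * u r x) (at x within {0..b})"
  unfolding u_def u'_def using has_field_derivative_Re[OF xi'_deriv, of x "of_real r"] by simp

lemma u_cont: "continuous_on {0..pi} (u r)"
  by (rule continuous_on_subset[OF DERIV_continuous_on[OF u_deriv] interval_pi_subset])

lemma u'_cont: "continuous_on {0..pi} (u' r)"
  by (rule continuous_on_subset[OF DERIV_continuous_on[OF u'_deriv] interval_pi_subset])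

lemma V_cont_pi: "continuous_on {0..pi} V"
  by (rule continuous_on_subset[OF V_cont interval_pi_subset])

lemma energy_u_exp_bounds:
  assumes x: "x \<in> {0..b}" and \<mu>: "\<mu> \<ge> 1"
  shows "(u' r x)\<^sup>2 + \<mu> * (u r x)\<^sup>2 \<le> \<mu> * exp ((Vmax + \<bar>\<mu> - r\<bar>) * x)"
    and "\<mu> * exp (- (Vmax + \<bar>\<mu> - r\<bar>) * x) \<le> (u' r x)\<^sup>2 + \<mu> * (u r x)\<^sup>2"
proof -
  have bound: "\<bar>V y - r + \<mu>\<bar> \<le> Vmax + \<bar>\<mu> - r\<bar>" if "y \<in> {0..b}" for y
    using abs_V_le_Vmax[OF that] by linarith
  show "(u' r x)\<^sup>2 + \<mu> * (u r x)\<^sup>2 \<le> \<mu> * exp ((Vmax + \<bar>\<mu> - r\<bar>) * x)"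
    using energy_exp_bounds(1)[where W = "\<lambda>y. V y - r", OF u_deriv u'_deriv \<mu> bound x]
    by (simp add: u_0 u'_0)
  show "\<mu> * exp (- (Vmax + \<bar>\<mu> - r\<bar>) * x) \<le> (u' r x)\<^sup>2 + \<mu> * (u r x)\<^sup>2"
    using energy_exp_bounds(2)[where W = "\<lambda>y. V y - r", OF u_deriv u'_deriv \<mu> bound x]
    by (simp add: u_0 u'_0)
qed

text \<open>Integration by parts of \<open>(u u')' = u'\<^sup>2 + (V - t) u\<^sup>2\<close>; the boundary terms vanish
  by the Neumann conditions.\<close>

lemma integral_energy_identity:
  assumes "u' t pi = 0"
  shows "integral {0..pi} (\<lambda>x. (u' t x)\<^sup>2 + m * (u t x)\<^sup>2) =
    integral {0..pi} (\<lambda>x. (t - V x + m) * (u t x)\<^sup>2)"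
proof -
  have "((\<lambda>x. (u' t x)\<^sup>2 + (V x - t) * (u t x)\<^sup>2) has_integral u t pi * u' t pi - u t 0 * u' t 0)
      {0..pi}"
  proof (rule fundamental_theorem_of_calculus)
    fix x assume "x \<in> {0..pi}"
    then have "x \<in> {0..b}" using interval_pi_subset by auto
    then have "(u t has_real_derivative u' t x) (at x within {0..pi})"
        "(u' t has_real_derivative (V x - t) * u t x) (at x within {0..pi})"
      using u_deriv u'_deriv interval_pi_subset by (blast intro: DERIV_subset)+
    from DERIV_mult[OF this]
    have "((\<lambda>x. u t x * u' t x) has_real_derivative (u' t x)\<^sup>2 + (V x - t) * (u t x)\<^sup>2)
        (at x within {0..pi})"
      by (simp add: power2_eq_square algebra_simps)
    then show "((\<lambda>x. u t x * u' t x) has_vector_derivative (u' t x)\<^sup>2 + (V x - t) * (u t x)\<^sup>2)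
        (at x within {0..pi})"
      by (simp add: has_real_derivative_iff_has_vector_derivative)
  qed simp
  then have "((\<lambda>x. (u' t x)\<^sup>2 + (V x - t) * (u t x)\<^sup>2) has_integral 0) {0..pi}"
    using assms by (simp add: u'_0)
  moreover have "((\<lambda>x. (t - V x + m) * (u t x)\<^sup>2) has_integral
      integral {0..pi} (\<lambda>x. (t - V x + m) * (u t x)\<^sup>2)) {0..pi}"
    by (intro integrable_integral integrable_continuous_interval continuous_intros u_cont V_cont_pi)
  ultimately have "((\<lambda>x. ((u' t x)\<^sup>2 + (V x - t) * (u t x)\<^sup>2) + (t - V x + m) * (u t x)\<^sup>2)
      has_integral 0 + integral {0..pi} (\<lambda>x. (t - V x + m) * (u t x)\<^sup>2)) {0..pi}"
    by (rule has_integral_add)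
  moreover have "(\<lambda>x. ((u' t x)\<^sup>2 + (V x - t) * (u t x)\<^sup>2) + (t - V x + m) * (u t x)\<^sup>2) =
      (\<lambda>x. (u' t x)\<^sup>2 + m * (u t x)\<^sup>2)"
    by (simp add: fun_eq_iff algebra_simps)
  ultimately have "((\<lambda>x. (u' t x)\<^sup>2 + m * (u t x)\<^sup>2) has_integral
      integral {0..pi} (\<lambda>x. (t - V x + m) * (u t x)\<^sup>2)) {0..pi}"
    by simp
  then show ?thesis by (rule integral_unique)
qed

definition eigenvalues :: "real set" where
  "eigenvalues = {t. xi' pi (of_real t) = 0}"

lemma u'_pi_eigenvalue: "t \<in> eigenvalues \<Longrightarrow> u' t pi = 0"
  using xi'_of_real[of pi t] interval_pi_subset by (auto simp: eigenvalues_def)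

lemma eigenvalue_lower_bound:
  assumes t: "t \<in> eigenvalues"
  shows "t > - Vmax - 1"
proof (rule ccontr)
  assume "\<not> t > - Vmax - 1"
  define \<alpha> where "\<alpha> = Vmax + \<bar>1 - t\<bar>"
  have "integral {0..pi} (\<lambda>x. exp (- \<alpha> * pi)) \<le> integral {0..pi} (\<lambda>x. (u' t x)\<^sup>2 + 1 * (u t x)\<^sup>2)"
  proof (intro integral_le integrable_continuous_interval continuous_intros u_cont u'_cont)
    fix x assume x: "x \<in> {0..pi}"
    have "- \<alpha> * pi \<le> - \<alpha> * x"
      using x Vmax_nonneg by (intro mult_left_mono_neg) (auto simp: \<alpha>_def)
    then have "exp (- \<alpha> * pi) \<le> exp (- \<alpha> * x)" by simp
    also have "\<dots> \<le> (u' t x)\<^sup>2 + 1 * (u t x)\<^sup>2"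
      using energy_u_exp_bounds(2)[of x 1 t] x interval_pi_subset by (auto simp: \<alpha>_def)
    finally show "exp (- \<alpha> * pi) \<le> (u' t x)\<^sup>2 + 1 * (u t x)\<^sup>2" .
  qed
  also have "\<dots> = integral {0..pi} (\<lambda>x. (t - V x + 1) * (u t x)\<^sup>2)"
    by (rule integral_energy_identity[OF u'_pi_eigenvalue[OF t]])
  also have "\<dots> \<le> integral {0..pi} (\<lambda>x. 0)"
  proof (intro integral_le integrable_continuous_interval continuous_intros u_cont V_cont_pi)
    fix x assume "x \<in> {0..pi}"
    then have "\<bar>V x\<bar> \<le> Vmax" using abs_V_le_Vmax interval_pi_subset by auto
    then show "(t - V x + 1) * (u t x)\<^sup>2 \<le> 0"
      using \<open>\<not> t > - Vmax - 1\<close> by (intro mult_nonpos_nonneg) auto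
  qed
  finally have "pi * exp (- \<alpha> * pi) \<le> 0" by simp
  then show False
    using pi_gt_zero by (simp add: mult_le_0_iff)
qed

text \<open>For \<open>t > - Vmax - 1\<close> the exponent \<open>Vmax + \<bar>max 1 t - t\<bar>\<close> of the energy estimate is at
  most \<open>2 Vmax + 2\<close>, so \<open>K\<close> bounds the energy growth on \<open>[0, b]\<close> uniformly in such \<open>t\<close>.\<close>

definition K :: real where
  "K = exp ((2 * Vmax + 2) * b)"

lemma K_ge_1: "K \<ge> 1"
  using Vmax_nonneg less_trans[OF pi_gt_zero b_gt_pi] by (simp add: K_def)

lemma energy_u_bounds_K:
  assumes t: "t > - Vmax - 1" and x: "x \<in> {0..b}"
  shows "(u' t x)\<^sup>2 + max 1 t * (u t x)\<^sup>2 \<le> max 1 t * K"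
    and "max 1 t / K \<le> (u' t x)\<^sup>2 + max 1 t * (u t x)\<^sup>2"
proof -
  define \<alpha> where "\<alpha> = Vmax + \<bar>max 1 t - t\<bar>"
  have "0 \<le> \<alpha>" "\<alpha> \<le> 2 * Vmax + 2"
    using t Vmax_nonneg by (auto simp: \<alpha>_def)
  then have "\<alpha> * x \<le> (2 * Vmax + 2) * b"
    using x Vmax_nonneg by (intro mult_mono) auto
  then have exp_le: "exp (\<alpha> * x) \<le> K"
    by (simp add: K_def)
  have "max 1 t * exp (\<alpha> * x) \<le> max 1 t * K"
    using exp_le by (intro mult_left_mono) auto
  then show "(u' t x)\<^sup>2 + max 1 t * (u t x)\<^sup>2 \<le> max 1 t * K"
    using energy_u_exp_bounds(1)[OF x, of "max 1 t" t] unfolding \<alpha>_def by linarith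
  have "inverse K \<le> inverse (exp (\<alpha> * x))"
    using exp_le by (intro le_imp_inverse_le) auto
  then have "max 1 t / K \<le> max 1 t * exp (- \<alpha> * x)"
    by (auto simp: divide_inverse exp_minus intro: mult_left_mono)
  then show "max 1 t / K \<le> (u' t x)\<^sup>2 + max 1 t * (u t x)\<^sup>2"
    using energy_u_exp_bounds(2)[OF x, of "max 1 t" t] unfolding \<alpha>_def by linarith
qed

lemma u_sq_le_K:
  assumes "t > - Vmax - 1" "x \<in> {0..b}"
  shows "(u t x)\<^sup>2 \<le> K"
proof -
  have "max 1 t * (u t x)\<^sup>2 \<le> max 1 t * K"
    using energy_u_bounds_K(1)[OF assms] zero_le_power2[of "u' t x"] by linarith
  then show ?thesis by (simp add: mult_le_cancel_left_pos)
qed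

lemma u'_sq_le:
  assumes "t > - Vmax - 1" "x \<in> {0..b}"
  shows "(u' t x)\<^sup>2 \<le> max 1 t * K"
  using energy_u_bounds_K(1)[OF assms] zero_le_power2[of "u t x"]
    mult_nonneg_nonneg[of "max 1 t" "(u t x)\<^sup>2"] by linarith

definition L2_norm_sq :: "real \<Rightarrow> real" where
  "L2_norm_sq t = integral {0..pi} (\<lambda>x. (u t x)\<^sup>2)"

definition L2_norm_sq_min :: real where
  "L2_norm_sq_min = pi / (K * (2 + Vmax))"

lemma L2_norm_sq_min_pos: "L2_norm_sq_min > 0"
  using K_ge_1 Vmax_nonneg by (simp add: L2_norm_sq_min_def)

lemma L2_norm_sq_ge_L2_norm_sq_min:
  assumes t: "t \<in> eigenvalues"
  shows "L2_norm_sq_min \<le> L2_norm_sq t"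
proof -
  define \<mu> where "\<mu> = max 1 t"
  have tV: "t > - Vmax - 1" by (rule eigenvalue_lower_bound[OF t])
  have "pi * (\<mu> / K) = integral {0..pi} (\<lambda>x. \<mu> / K)" by simp
  also have "\<dots> \<le> integral {0..pi} (\<lambda>x. (u' t x)\<^sup>2 + \<mu> * (u t x)\<^sup>2)"
    using energy_u_bounds_K(2)[OF tV] interval_pi_subset unfolding \<mu>_def
    by (intro integral_le integrable_continuous_interval continuous_intros u_cont u'_cont) auto
  also have "\<dots> = integral {0..pi} (\<lambda>x. (t - V x + \<mu>) * (u t x)\<^sup>2)"
    by (rule integral_energy_identity[OF u'_pi_eigenvalue[OF t]])
  also have "\<dots> \<le> integral {0..pi} (\<lambda>x. (\<mu> * (2 + Vmax)) * (u t x)\<^sup>2)"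
  proof (intro integral_le integrable_continuous_interval continuous_intros u_cont V_cont_pi)
    fix x assume "x \<in> {0..pi}"
    then have "\<bar>V x\<bar> \<le> Vmax" using abs_V_le_Vmax interval_pi_subset by auto
    moreover have "Vmax \<le> \<mu> * Vmax" using Vmax_nonneg by (simp add: \<mu>_def mult_le_cancel_right1)
    ultimately have "t - V x + \<mu> \<le> \<mu> * (2 + Vmax)" by (simp add: \<mu>_def algebra_simps)
    then show "(t - V x + \<mu>) * (u t x)\<^sup>2 \<le> (\<mu> * (2 + Vmax)) * (u t x)\<^sup>2"
      by (rule mult_right_mono) simp
  qed
  also have "\<dots> = \<mu> * (2 + Vmax) * L2_norm_sq t" by (simp add: L2_norm_sq_def)
  finally have "\<mu> * pi \<le> \<mu> * (K * (2 + Vmax) * L2_norm_sq t)"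
    using K_ge_1 by (simp add: field_simps)
  then have "pi \<le> K * (2 + Vmax) * L2_norm_sq t"
    by (simp add: \<mu>_def mult_le_cancel_left_pos)
  then show ?thesis
    using K_ge_1 Vmax_nonneg by (simp add: L2_norm_sq_min_def divide_le_eq mult.commute)
qed

lemma L2_norm_sq_pos: "t \<in> eigenvalues \<Longrightarrow> L2_norm_sq t > 0"
  using L2_norm_sq_ge_L2_norm_sq_min L2_norm_sq_min_pos by fastforce

lemma L2_norm_sq_le_pi_K:
  assumes "t \<in> eigenvalues"
  shows "L2_norm_sq t \<le> pi * K"
proof -
  have "L2_norm_sq t \<le> integral {0..pi} (\<lambda>x. K)"
    unfolding L2_norm_sq_def using u_sq_le_K[OF eigenvalue_lower_bound[OF assms]] interval_pi_subset
    by (intro integral_le integrable_continuous_interval continuous_intros u_cont) auto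
  then show ?thesis by simp
qed

lemma k_pi_of_real: "k_pi xi s (of_real t) = of_real (integral {0..pi} (\<lambda>x. u s x * u t x))"
proof -
  have "k_pi xi s (of_real t) = integral {0..pi} (\<lambda>x. of_real (u s x * u t x))"
    unfolding k_pi_def using interval_pi_subset by (intro integral_cong) (auto simp: xi_of_real)
  also have "\<dots> = of_real (integral {0..pi} (\<lambda>x. u s x * u t x))"
    by (intro integral_unique has_integral_of_real integrable_integral integrable_continuous_interval
        continuous_intros u_cont)
  finally show ?thesis .
qed

lemma k_pi_diag: "k_pi xi t (of_real t) = of_real (L2_norm_sq t)"
  by (simp add: k_pi_of_real L2_norm_sq_def power2_eq_square)

lemma k_pi_eigenvalue:
  assumes "t \<in> eigenvalues" "of_real t \<noteq> z"
  shows "k_pi xi t z = xi pi (of_real t) * xi' pi z / (of_real t - z)"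
  using integral_unique[OF lagrange_identity[OF assms(2)]] assms(1)
  by (simp add: k_pi_def eigenvalues_def)

lemma u_orthogonal:
  assumes "s \<in> eigenvalues" "t \<in> eigenvalues" "s \<noteq> t"
  shows "integral {0..pi} (\<lambda>x. u s x * u t x) = 0"
  using k_pi_eigenvalue[of s "of_real t"] k_pi_of_real[of s t] assms
  by (simp add: eigenvalues_def)

lemma bessel_inequality_eigenfunctions:
  assumes "finite G" "G \<subseteq> eigenvalues" "continuous_on {0..pi} f"
  shows "(\<Sum>t\<in>G. (integral {0..pi} (\<lambda>x. f x * u t x))\<^sup>2 / L2_norm_sq t)
           \<le> integral {0..pi} (\<lambda>x. f x * f x)"
  unfolding L2_norm_sq_def power2_eq_square[of "u _ _"]
proof (rule bessel_inequality_integral[OF assms(1,3)])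
  show "integral {0..pi} (\<lambda>x. u s x * u t x) = 0" if "s \<in> G" "t \<in> G" "s \<noteq> t" for s t
    using u_orthogonal that assms(2) by auto
  show "integral {0..pi} (\<lambda>x. u t x * u t x) > 0" if "t \<in> G" for t
    using L2_norm_sq_pos[of t] that assms(2) by (auto simp: L2_norm_sq_def power2_eq_square)
qed (rule u_cont)

lemma abs_u_sub_1_le:
  assumes t: "t > - Vmax - 1" and x: "x \<in> {0..b}"
  shows "\<bar>u t x - 1\<bar> \<le> sqrt (max 1 t * K) * x"
proof -
  have "\<exists>y\<in>{0..x}. u t x - u t 0 = (\<lambda>h. u' t y * h) (x - 0)"
  proof (rule mvt_very_simple)
    fix y assume "0 \<le> y" "y \<le> x"
    then have "(u t has_real_derivative u' t y) (at y within {0..x})"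
      using x by (intro DERIV_subset[OF u_deriv]) auto
    then show "(u t has_derivative (\<lambda>h. u' t y * h)) (at y within {0..x})"
      by (simp add: has_field_derivative_def)
  qed (use x in auto)
  then obtain y where y: "y \<in> {0..x}" "u t x - 1 = u' t y * x"
    by (auto simp: u_0)
  have "\<bar>u' t y\<bar> \<le> sqrt (max 1 t * K)"
    using real_sqrt_le_mono[OF u'_sq_le[OF t]] y x by auto
  then show ?thesis
    using x y by (simp add: abs_mult mult_right_mono)
qed

lemma integral_tent_mult_u_ge:
  assumes t: "t \<in> eigenvalues" "t \<le> T" and T: "1 \<le> T"
    and h: "h = 1 / (2 * sqrt (T * K))"
  shows "h\<^sup>2 / 4 \<le> integral {0..pi} (\<lambda>x. max 0 (h - x) * u t x)"
proof -
  have h_pos: "0 < h" and "h \<le> 1 / 2"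
    using K_ge_1 T mult_mono[OF T K_ge_1] by (auto simp: h field_simps)
  then have h_pi: "h \<le> pi" using pi_gt3 by linarith
  have "h\<^sup>2 / 4 = integral {0..pi} (\<lambda>x. max 0 (h - x) * (1 / 2))"
    using integral_tent[of h pi] h_pos h_pi by simp
  also have "\<dots> \<le> integral {0..pi} (\<lambda>x. max 0 (h - x) * u t x)"
  proof (intro integral_le integrable_continuous_interval continuous_intros u_cont)
    fix x assume x: "x \<in> {0..pi}"
    show "max 0 (h - x) * (1 / 2) \<le> max 0 (h - x) * u t x"
    proof (cases "x \<le> h")
      case True
      have "sqrt (max 1 t * K) * x \<le> sqrt (T * K) * h"
        using t T K_ge_1 x True by (intro mult_mono real_sqrt_le_mono) auto
      also have "\<dots> = 1 / 2"
        using T K_ge_1 by (simp add: h)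
      finally have "1 / 2 \<le> u t x"
        using abs_u_sub_1_le[OF eigenvalue_lower_bound[OF t(1)], of x] x interval_pi_subset by auto
      then show ?thesis by (intro mult_left_mono) auto
    qed simp
  qed
  finally show ?thesis .
qed

lemma card_eigenvalues_le:
  assumes T: "1 \<le> T" and G: "finite G" "G \<subseteq> eigenvalues" "\<forall>t\<in>G. t \<le> T"
  shows "real (card G) \<le> 16 * pi * K * sqrt (T * K)"
proof -
  define h where "h = 1 / (2 * sqrt (T * K))"
  define f where "f x = max 0 (h - x)" for x
  have f_cont: "continuous_on {0..pi} f"
    unfolding f_def by (intro continuous_intros)
  have h_pos: "0 < h" and "h \<le> 1 / 2"
    using K_ge_1 T mult_mono[OF T K_ge_1] by (auto simp: h_def field_simps)
  then have h_pi: "h \<le> pi" using pi_gt3 by linarith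
  have term_ge: "(h\<^sup>2 / 4)\<^sup>2 / (pi * K) \<le> (integral {0..pi} (\<lambda>x. f x * u t x))\<^sup>2 / L2_norm_sq t"
    if "t \<in> G" for t
  proof (rule frac_le)
    show "(h\<^sup>2 / 4)\<^sup>2 \<le> (integral {0..pi} (\<lambda>x. f x * u t x))\<^sup>2"
      using integral_tent_mult_u_ge[of t T h] that G T by (intro power_mono) (auto simp: f_def h_def)
    show "0 < L2_norm_sq t" "L2_norm_sq t \<le> pi * K"
      using L2_norm_sq_pos L2_norm_sq_le_pi_K that G by auto
  qed simp
  have "real (card G) * ((h\<^sup>2 / 4)\<^sup>2 / (pi * K)) \<le>
      (\<Sum>t\<in>G. (integral {0..pi} (\<lambda>x. f x * u t x))\<^sup>2 / L2_norm_sq t)"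
    using term_ge by (rule sum_bounded_below)
  also have "\<dots> \<le> integral {0..pi} (\<lambda>x. f x * f x)"
    by (rule bessel_inequality_eigenfunctions[OF G(1,2) f_cont])
  also have "\<dots> \<le> integral {0..pi} (\<lambda>x. h * f x)"
    using h_pos by (intro integral_le integrable_continuous_interval continuous_intros f_cont
        mult_right_mono) (auto simp: f_def)
  also have "\<dots> = h * (h\<^sup>2 / 2)"
    using integral_tent[of h pi] h_pos h_pi by (simp add: f_def)
  finally have "(real (card G) * h) * h ^ 3 \<le> (8 * pi * K) * h ^ 3"
    using K_ge_1 by (simp add: field_simps eval_nat_numeral)
  then have "real (card G) * h \<le> 8 * pi * K"
    using h_pos by (simp add: mult_le_cancel_right_pos)
  then show ?thesis
    using h_pos T K_ge_1 by (simp add: h_def field_simps)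
qed

lemma finite_eigenvalues_le: "finite {t \<in> eigenvalues. t \<le> T}"
proof -
  have "finite {t \<in> eigenvalues. t \<le> T} \<and>
      card {t \<in> eigenvalues. t \<le> T} \<le> nat \<lceil>16 * pi * K * sqrt (max 1 T * K)\<rceil>"
  proof (rule finite_if_finite_subsets_card_bdd)
    fix G assume "G \<subseteq> {t \<in> eigenvalues. t \<le> T}" "finite G"
    then have "real (card G) \<le> 16 * pi * K * sqrt (max 1 T * K)"
      by (intro card_eigenvalues_le) auto
    then show "card G \<le> nat \<lceil>16 * pi * K * sqrt (max 1 T * K)\<rceil>"
      by linarith
  qed
  then show ?thesis ..
qed

lemma inverse_summable_on_eigenvalues: "(\<lambda>t. 1 / t) summable_on {t \<in> eigenvalues. 1 < t}"
proof (rule summable_on_inverse_if_card_le_sqrt[where C = "16 * pi * K * sqrt K"])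
  fix T G assume "1 \<le> T" "finite G" "G \<subseteq> {t \<in> eigenvalues. 1 < t}" "\<forall>t\<in>G. t \<le> T"
  then have "real (card G) \<le> 16 * pi * K * sqrt (T * K)"
    by (intro card_eigenvalues_le) auto
  then show "real (card G) \<le> 16 * pi * K * sqrt K * sqrt T"
    by (simp add: real_sqrt_mult mult_ac)
qed auto

lemma norm_xi_le:
  assumes "t \<in> eigenvalues" "x \<in> {0..b}"
  shows "norm (xi x (of_real t)) \<le> sqrt K"
  using real_sqrt_le_mono[OF u_sq_le_K[OF eigenvalue_lower_bound[OF assms(1)] assms(2)]] assms(2)
  by (simp add: xi_of_real)

definition expansion_coeff :: "complex \<Rightarrow> real \<Rightarrow> complex" where
  "expansion_coeff z t = k_pi xi t z / k_pi xi t (of_real t)"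

lemma norm_expansion_coeff_le:
  assumes t: "t \<in> eigenvalues" and tz: "of_real t \<noteq> z"
  shows "norm (expansion_coeff z t) \<le> sqrt K * norm (xi' pi z) / (norm (of_real t - z) * L2_norm_sq_min)"
proof -
  have "norm (expansion_coeff z t) = norm (xi pi (of_real t)) * norm (xi' pi z) / (norm (of_real t - z) * L2_norm_sq t)"
    using L2_norm_sq_pos[OF t]
    by (simp add: expansion_coeff_def k_pi_eigenvalue[OF t tz] k_pi_diag norm_mult norm_divide)
  also have "\<dots> \<le> sqrt K * norm (xi' pi z) / (norm (of_real t - z) * L2_norm_sq_min)"
    using norm_xi_le[OF t] interval_pi_subset L2_norm_sq_ge_L2_norm_sq_min[OF t] L2_norm_sq_min_pos tz K_ge_1
    by (intro frac_le mult_right_mono mult_left_mono mult_pos_pos) auto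
  finally show ?thesis .
qed

lemma norm_expansion_coeff_le_inverse:
  assumes t: "t \<in> eigenvalues" and R: "2 * norm z + 2 < t"
  shows "norm (expansion_coeff z t) \<le> 2 * sqrt K * norm (xi' pi z) / L2_norm_sq_min * (1 / t)"
proof -
  have t_pos: "0 < t" and "norm z < t"
    using norm_ge_zero[of z] R by linarith+
  then have tz: "of_real t \<noteq> z" by auto
  have "norm (of_real t :: complex) = t" using t_pos by simp
  then have "t / 2 \<le> norm (of_real t - z)"
    using norm_triangle_ineq2[of "of_real t" z] R by linarith
  then have "sqrt K * norm (xi' pi z) / (norm (of_real t - z) * L2_norm_sq_min)
      \<le> sqrt K * norm (xi' pi z) / (t / 2 * L2_norm_sq_min)"
    using t_pos L2_norm_sq_min_pos K_ge_1 by (intro divide_left_mono mult_right_mono mult_pos_pos) auto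
  then have "norm (expansion_coeff z t) \<le> sqrt K * norm (xi' pi z) / (t / 2 * L2_norm_sq_min)"
    using norm_expansion_coeff_le[OF t tz] by simp
  then show ?thesis
    by (simp add: field_simps)
qed

lemma summable_norm_expansion_coeff: "(\<lambda>t. norm (expansion_coeff z t)) summable_on eigenvalues"
proof -
  define R where "R = 2 * norm z + 2"
  have "1 < R" using norm_ge_zero[of z] unfolding R_def by linarith
  then have "{t \<in> eigenvalues. R < t} \<subseteq> {t \<in> eigenvalues. 1 < t}" by auto
  from summable_on_subset_banach[OF inverse_summable_on_eigenvalues this]
  have "(\<lambda>t. norm (expansion_coeff z t)) summable_on {t \<in> eigenvalues. R < t}"
  proof (rule summable_on_comparison_test[OF summable_on_cmult_right])
    show "norm (expansion_coeff z t) \<le> 2 * sqrt K * norm (xi' pi z) / L2_norm_sq_min * (1 / t)"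
      if "t \<in> {t \<in> eigenvalues. R < t}" for t
      using that norm_expansion_coeff_le_inverse[of t z] by (simp add: R_def)
  qed simp
  moreover have "(\<lambda>t. norm (expansion_coeff z t)) summable_on {t \<in> eigenvalues. t \<le> R}"
    by (rule summable_on_finite[OF finite_eigenvalues_le])
  ultimately have "(\<lambda>t. norm (expansion_coeff z t)) summable_on
      {t \<in> eigenvalues. t \<le> R} \<union> {t \<in> eigenvalues. R < t}"
    by (intro summable_on_union)
  also have "{t \<in> eigenvalues. t \<le> R} \<union> {t \<in> eigenvalues. R < t} = eigenvalues"
    by auto
  finally show ?thesis .
qed

end

theorem proposition4p7:
  fixes b :: real and V :: "real \<Rightarrow> real"
    and xi xi' :: "real \<Rightarrow> complex \<Rightarrow> complex" and z :: complex
  assumes b: "b > pi"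
    and V_ac: "abs_continuous_on 0 b V"
    and xi_init: "\<And>w. xi 0 w = 1" "\<And>w. xi' 0 w = 0"
    and xi_deriv: "\<And>w x. x \<in> {0..b} \<Longrightarrow>
          ((\<lambda>y. xi y w) has_vector_derivative xi' x w) (at x within {0..b})"
    and xi'_deriv: "\<And>w x. x \<in> {0..b} \<Longrightarrow>
          ((\<lambda>y. xi' y w) has_vector_derivative (complex_of_real (V x) - w) * xi x w)
             (at x within {0..b})"
  defines "S \<equiv> {t::real. xi' pi (complex_of_real t) = 0}"
    and "c \<equiv> (\<lambda>t. k_pi xi t z / k_pi xi t (complex_of_real t))"
  shows "(\<forall>x\<in>{0..b}. (\<lambda>t. norm (c t * xi x (complex_of_real t))) summable_on S)
     \<and> uniform_limit {0..b}
         (\<lambda>F x. \<Sum>t\<in>F. norm (c t * xi x (complex_of_real t)))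
         (\<lambda>x. \<Sum>\<^sub>\<infinity>t\<in>S. norm (c t * xi x (complex_of_real t)))
         (finite_subsets_at_top S)
     \<and> uniform_limit {0..b}
         (\<lambda>F x. \<Sum>t\<in>F. c t * xi x (complex_of_real t))
         (\<lambda>x. \<Sum>\<^sub>\<infinity>t\<in>S. c t * xi x (complex_of_real t))
         (finite_subsets_at_top S)"
proof -
  interpret neumann_solution b V xi xi'
    using b abs_continuous_on_imp_continuous_on[OF V_ac] xi_init xi_deriv xi'_deriv
    by unfold_locales
  have S: "S = eigenvalues" and c: "c = expansion_coeff z"
    by (simp_all add: S_def eigenvalues_def c_def expansion_coeff_def fun_eq_iff)
  define M where "M t = norm (expansion_coeff z t) * sqrt K" for t
  have M: "M summable_on S"
    unfolding M_def S by (intro summable_on_cmult_left summable_norm_expansion_coeff)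
  have bound: "norm (c t * xi x (of_real t)) \<le> M t" if "t \<in> S" "x \<in> {0..b}" for t x
    using norm_xi_le[of t x] that unfolding S c M_def norm_mult by (intro mult_left_mono) auto
  show ?thesis
  proof (intro conjI ballI)
    show "(\<lambda>t. norm (c t * xi x (of_real t))) summable_on S" if "x \<in> {0..b}" for x
      using bound that by (intro summable_on_comparison_test[OF M]) auto
    show "uniform_limit {0..b} (\<lambda>F x. \<Sum>t\<in>F. norm (c t * xi x (of_real t)))
        (\<lambda>x. \<Sum>\<^sub>\<infinity>t\<in>S. norm (c t * xi x (of_real t))) (finite_subsets_at_top S)"
      using bound by (intro Weierstrass_m_test_general[OF _ M]) auto
    show "uniform_limit {0..b} (\<lambda>F x. \<Sum>t\<in>F. c t * xi x (of_real t))
        (\<lambda>x. \<Sum>\<^sub>\<infinity>t\<in>S. c t * xi x (of_real t)) (finite_subsets_at_top S)"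
      using bound by (intro Weierstrass_m_test_general[OF _ M])
  qed
qed

end
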